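(* Let $a,b\in\alpha$ with $a\neq\tau(a)$ and $b\neq\tau(b)$, and let $m,n\ge3$. The monoliteral words $a^m=aa\cdots a$ ($m$ letters) and $b^n$ in the alphabet $\alpha$ are homotopic if and only if $a=b$ and $m=n$.
   Context: Fix a set $\alpha$ with an involution $\tau:\alpha\to\alpha$. An $\alpha$-alphabet is a set $\mathcal A$ with a map $\mathcal A\to\alpha$, $A\mapsto|A|$. An étale word over $\alpha$ is a pair $(\mathcal A,w)$ with $\mathcal A$ an $\alpha$-alphabet and $w$ a finite word in letters of $\mathcal A$. A nanoword is an étale word with $\mathcal A$ finite and every letter occurring exactly twice. Isomorphism of nanowords: a bijection of alphabets preserving $|\cdot|$ carrying one word to the other letterwise. Homotopy moves on nanowords ($x,y,z,t$ words in the remaining letters): (1) $(\mathcal A,xAAy)\mapsto(\mathcal A\setminus\{A\},xy)$; (2) $(\mathcal A,xAByBAz)\mapsto(\mathcal A\setminus\{A,B\},xyz)$ if $|B|=\tau(|A|)$; (3) $(\mathcal A,xAByACzBCt)\mapsto(\mathcal A,xBAyCAzCBt)$ if $A,B,C$ distinct with $|A|=|B|=|C|$. Homotopy of nanowords is the equivalence relation generated by isomorphisms, these moves and inverses. Desingularization: for an étale word $(\mathcal A,w)$ with $m_w(A)$ the number of occurrences of $A$, let $\mathcal A^d=\{A_{i,j}:1\le i<j\le m_w(A)\}$ with $|A_{i,j}|=|A|$, and $w^d$ obtained from $w$ by deleting letters of multiplicity 1 and replacing the $i$-th occurrence of $A$ (with $m=m_w(A)\ge2$) by $A_{1,i}\cdots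 A_{i-1,i}A_{i,i+1}\cdots A_{i,m}$. Two étale words are homotopic if their desingularizations are homotopic nanowords. A word in the alphabet $\alpha$ is regarded as the étale word $(\alpha,w)$ with identity projection. *)

theory Defs
  imports Main
begin

text \<open>A nanoword over alpha is represented by a pair (w, p) of a word w over a letter
type 'l and a projection p :: 'l => 'a; its alphabet is set w (every letter of the
alphabet occurs in w, exactly twice).  Only p restricted to set w matters.\<close>

definition nanoword :: "'l list \<Rightarrow> bool" where
  "nanoword w \<longleftrightarrow> (\<forall>x\<in>set w. count_list w x = 2)"

inductive hmove :: "('a \<Rightarrow> 'a) \<Rightarrow> ('l list \<times> ('l \<Rightarrow> 'a)) \<Rightarrow> ('l list \<times> ('l \<Rightarrow> 'a)) \<Rightarrow> bool"
  for \<tau> :: "'a \<Rightarrow> 'a" where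
  iso: "\<lbrakk>nanoword w; inj_on f (set w); \<forall>x\<in>set w. q (f x) = p x\<rbrakk>
        \<Longrightarrow> hmove \<tau> (w, p) (map f w, q)"
| move1: "nanoword (x @ [A, A] @ y) \<Longrightarrow> hmove \<tau> (x @ [A, A] @ y, p) (x @ y, p)"
| move2: "\<lbrakk>nanoword (x @ [A, B] @ y @ [B, A] @ z); p B = \<tau> (p A)\<rbrakk>
        \<Longrightarrow> hmove \<tau> (x @ [A, B] @ y @ [B, A] @ z, p) (x @ y @ z, p)"
| move3: "\<lbrakk>nanoword (x @ [A, B] @ y @ [A, C] @ z @ [B, C] @ t); distinct [A, B, C];
          p A = p B; p B = p C\<rbrakk>
        \<Longrightarrow> hmove \<tau> (x @ [A, B] @ y @ [A, C] @ z @ [B, C] @ t, p)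
                     (x @ [B, A] @ y @ [C, A] @ z @ [C, B] @ t, p)"

definition nano_homotopic ::
  "('a \<Rightarrow> 'a) \<Rightarrow> ('l list \<times> ('l \<Rightarrow> 'a)) \<Rightarrow> ('l list \<times> ('l \<Rightarrow> 'a)) \<Rightarrow> bool" where
  "nano_homotopic \<tau> = (\<lambda>u v. hmove \<tau> u v \<or> hmove \<tau> v u)\<^sup>*\<^sup>*"

text \<open>Desingularization: the i-th occurrence (1-based) of a letter A of multiplicity m
is replaced by A_{1,i} ... A_{i-1,i} A_{i,i+1} ... A_{i,m}; letter A_{i,j} is (A,i,j).
Letters of multiplicity 1 give the empty block, i.e. are deleted.\<close>

definition desing :: "'l list \<Rightarrow> ('l \<times> nat \<times> nat) list" where
  "desing w = concat (map (\<lambda>k.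
      let A = w ! k; i = count_list (take (Suc k) w) A; m = count_list w A
      in map (\<lambda>j. (A, j, i)) [1..<i] @ map (\<lambda>j. (A, i, j)) [Suc i..<Suc m])
    [0..<length w])"

definition etale_homotopic ::
  "('a \<Rightarrow> 'a) \<Rightarrow> ('l list \<times> ('l \<Rightarrow> 'a)) \<Rightarrow> ('l list \<times> ('l \<Rightarrow> 'a)) \<Rightarrow> bool" where
  "etale_homotopic \<tau> u v \<longleftrightarrow>
     nano_homotopic \<tau> (desing (fst u), snd u \<circ> fst) (desing (fst v), snd v \<circ> fst)"

end

theory Submission
  imports Defs "HOL-Library.Product_Lexorder"
begin

(* For a letter a with a \<noteq> \<tau> a, give a projection x the charge 1, -1 or 0 according as
   x = a, x = \<tau> a or neither, and give a letter A of a nanoword the index obtained by summing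
   the linking signs of A with the other letters B, weighted by the charges of their projections.
   The total charge of the letters with nonzero index is a homotopy invariant: a letter removed by
   move (1) has index 0, the two letters removed by move (2) have equal indices and opposite
   charges, and move (3) only changes linking signs inside a triangle of letters of equal
   projection, keeping every row sum of that triangle.
   In the desingularization of a^m the letter (a, i, j), i < j, has index (j - i)(m + 1 - i - j),
   so the invariant counts the pairs 1 \<le> i < j \<le> m off the antidiagonal i + j = m + 1; this
   count is positive for m \<ge> 3 and strictly increasing from m = 2 on, whereas for b^n with
   b \<noteq> a every letter has charge 0 or -1. *)

section \<open>A homotopy invariant of nanowords\<close>

definition link_sign :: "'l list \<Rightarrow> 'l \<Rightarrow> 'l \<Rightarrow> int" where
  "link_sign w A B = (if A = B then 0 else
     (let f = filter (\<lambda>v. v = A \<or> v = B) w in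
      if f = [A, B, A, B] then 1 else if f = [B, A, B, A] then -1 else 0))"

definition charge :: "('a \<Rightarrow> 'a) \<Rightarrow> 'a \<Rightarrow> 'a \<Rightarrow> int" where
  "charge \<tau> a x = (if x = a then 1 else if x = \<tau> a then -1 else 0)"

definition link_index :: "('a \<Rightarrow> 'a) \<Rightarrow> 'a \<Rightarrow> 'l list \<Rightarrow> ('l \<Rightarrow> 'a) \<Rightarrow> 'l \<Rightarrow> int" where
  "link_index \<tau> a w p A = (\<Sum>B\<in>set w. link_sign w A B * charge \<tau> a (p B))"

fun index_count :: "('a \<Rightarrow> 'a) \<Rightarrow> 'a \<Rightarrow> 'l list \<times> ('l \<Rightarrow> 'a) \<Rightarrow> int" where
  "index_count \<tau> a (w, p) =
     (\<Sum>A\<in>set w. if link_index \<tau> a w p A = 0 then 0 else charge \<tau> a (p A))"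

lemma link_sign_self [simp]: "link_sign w A A = 0"
  by (simp add: link_sign_def)

lemma link_sign_swap: "link_sign w B A = - link_sign w A B"
proof -
  have "(\<lambda>v. v = B \<or> v = A) = (\<lambda>v. v = A \<or> v = B)" by auto
  then show ?thesis by (auto simp: link_sign_def Let_def)
qed

lemma link_sign_cong_filter:
  "filter (\<lambda>v. v = A \<or> v = B) w = filter (\<lambda>v. v = A \<or> v = B) w'
   \<Longrightarrow> link_sign w A B = link_sign w' A B"
  by (simp add: link_sign_def)

lemma filter_two_letters_absent:
  "A \<notin> set l \<Longrightarrow> B \<notin> set l \<Longrightarrow> filter (\<lambda>v. v = A \<or> v = B) l = []"
  by (auto simp: filter_empty_conv)

lemma link_sign_two_occurrences:
  assumes "A \<notin> set x" "A \<notin> set y" "A \<notin> set z" "E \<noteq> A"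
  shows "link_sign (x @ A # y @ A # z) A E =
    (if count_list x E = 0 \<and> count_list y E = 1 \<and> count_list z E = 1 then 1
     else if count_list x E = 1 \<and> count_list y E = 1 \<and> count_list z E = 0 then -1 else 0)"
proof -
  have only_E: "filter (\<lambda>v. v = A \<or> v = E) l = replicate (count_list l E) E" if "A \<notin> set l" for l
    using that by (induction l) auto
  have "replicate i E @ A # replicate j E @ A # replicate k E = [A, E, A, E]
      \<longleftrightarrow> i = 0 \<and> j = 1 \<and> k = 1" for i j k
    using \<open>E \<noteq> A\<close>
    by (cases i; cases j; cases k) (auto simp: Cons_eq_append_conv append_eq_Cons_conv)
  moreover have "replicate i E @ A # replicate j E @ A # replicate k E = [E, A, E, A]
      \<longleftrightarrow> i = 1 \<and> j = 1 \<and> k = 0" for i j k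
    using \<open>E \<noteq> A\<close>
    by (cases i; cases j; cases k) (auto simp: Cons_eq_append_conv append_eq_Cons_conv)
  ultimately show ?thesis
    using assms by (simp add: link_sign_def Let_def only_E)
qed

lemma link_sign_map:
  assumes "inj_on f (set w)" "A \<in> set w" "B \<in> set w"
  shows "link_sign (map f w) (f A) (f B) = link_sign w A B"
proof (cases "A = B")
  case False
  let ?L = "filter (\<lambda>v. v = A \<or> v = B) w"
  have "f A \<noteq> f B" using False assms by (simp add: inj_on_eq_iff)
  have "filter (\<lambda>v. v = f A \<or> v = f B) (map f w) = map f (filter (\<lambda>v. f v = f A \<or> f v = f B) w)"
    by (simp add: filter_map comp_def)
  also have "filter (\<lambda>v. f v = f A \<or> f v = f B) w = ?L"
    using assms by (intro filter_cong) (auto simp: inj_on_eq_iff)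
  finally have filter_map_eq: "filter (\<lambda>v. v = f A \<or> v = f B) (map f w) = map f ?L" .
  have inj_ABAB: "inj_on f (set ?L \<union> set [A, B, A, B])"
    and inj_BABA: "inj_on f (set ?L \<union> set [B, A, B, A])"
    by (rule inj_on_subset[OF assms(1)]; use assms(2,3) in auto)+
  show ?thesis
    using False \<open>f A \<noteq> f B\<close> inj_on_map_eq_map[OF inj_ABAB] inj_on_map_eq_map[OF inj_BABA]
    unfolding link_sign_def Let_def filter_map_eq by simp
qed simp

lemma charge_involution:
  assumes "\<forall>x. \<tau> (\<tau> x) = x" "a \<noteq> \<tau> a"
  shows "charge \<tau> a (\<tau> x) = - charge \<tau> a x"
proof -
  have "\<tau> x = a \<longleftrightarrow> x = \<tau> a" "\<tau> x = \<tau> a \<longleftrightarrow> x = a"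
    using assms(1) by metis+
  then show ?thesis
    using assms(2) by (auto simp: charge_def)
qed

lemma link_index_remove_letters:
  assumes "set w = set w' \<union> R" "set w' \<inter> R = {}"
    and "\<And>E. E \<in> set w' \<Longrightarrow> link_sign w D E = link_sign w' D E"
    and "(\<Sum>E\<in>R. link_sign w D E * charge \<tau> a (p E)) = 0"
  shows "link_index \<tau> a w p D = link_index \<tau> a w' p D"
proof -
  have "finite R" using assms(1) by (metis finite_Un finite_set)
  then have "link_index \<tau> a w p D =
      (\<Sum>E\<in>set w'. link_sign w D E * charge \<tau> a (p E)) + (\<Sum>E\<in>R. link_sign w D E * charge \<tau> a (p E))"
    unfolding link_index_def assms(1) using assms(2) by (simp add: sum.union_disjoint)
  then show ?thesis
    using assms(3,4) by (simp add: link_index_def)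
qed

lemma index_count_remove_letters:
  assumes "set w = set w' \<union> R" "set w' \<inter> R = {}"
    and "\<And>D. D \<in> set w' \<Longrightarrow> link_index \<tau> a w p D = link_index \<tau> a w' p D"
    and "(\<Sum>D\<in>R. if link_index \<tau> a w p D = 0 then 0 else charge \<tau> a (p D)) = 0"
  shows "index_count \<tau> a (w, p) = index_count \<tau> a (w', p)"
proof -
  have "finite R" using assms(1) by (metis finite_Un finite_set)
  then have "index_count \<tau> a (w, p) =
      (\<Sum>D\<in>set w'. if link_index \<tau> a w p D = 0 then 0 else charge \<tau> a (p D))
      + (\<Sum>D\<in>R. if link_index \<tau> a w p D = 0 then 0 else charge \<tau> a (p D))"
    unfolding index_count.simps assms(1) using assms(2) by (simp add: sum.union_disjoint)
  then show ?thesis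
    using assms(3,4) by simp
qed

lemma link_index_eq_block:
  assumes "set v = set w" "T \<subseteq> set w"
    and "\<And>D E. \<not> (D \<in> T \<and> E \<in> T) \<Longrightarrow> link_sign v D E = link_sign w D E"
    and "\<And>D. D \<in> T \<Longrightarrow> (\<Sum>E\<in>T. link_sign v D E) = (\<Sum>E\<in>T. link_sign w D E)"
    and "\<And>E. E \<in> T \<Longrightarrow> p E = c"
  shows "link_index \<tau> a v p D = link_index \<tau> a w p D"
proof (cases "D \<in> T")
  case True
  have "link_index \<tau> a u p D =
      (\<Sum>E\<in>set w - T. link_sign u D E * charge \<tau> a (p E)) + (\<Sum>E\<in>T. link_sign u D E) * charge \<tau> a c"
    if "set u = set w" for u
    unfolding link_index_def that using assms(2,5)
    by (simp add: sum.subset_diff[of T] sum_distrib_right)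
  moreover have "(\<Sum>E\<in>set w - T. link_sign v D E * charge \<tau> a (p E))
      = (\<Sum>E\<in>set w - T. link_sign w D E * charge \<tau> a (p E))"
    using assms(3) by (intro sum.cong) auto
  ultimately show ?thesis
    using assms(1,4) True by simp
next
  case False
  then show ?thesis
    unfolding link_index_def assms(1) using assms(3) by (intro sum.cong) auto
qed

lemma index_count_map:
  assumes "inj_on f (set w)" "\<forall>x\<in>set w. q (f x) = p x"
  shows "index_count \<tau> a (map f w, q) = index_count \<tau> a (w, p)"
proof -
  have "link_index \<tau> a (map f w) q (f D) = link_index \<tau> a w p D" if "D \<in> set w" for D
    unfolding link_index_def set_map sum.reindex[OF assms(1)]
    using assms that by (intro sum.cong) (simp_all add: link_sign_map)
  then show ?thesis
    unfolding index_count.simps set_map sum.reindex[OF assms(1)]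
    using assms(2) by (intro sum.cong) simp_all
qed

lemma nanoword_not_in_gaps:
  assumes "nanoword (x @ A # y @ A # z)"
  shows "A \<notin> set x" "A \<notin> set y" "A \<notin> set z"
proof -
  have "count_list (x @ A # y @ A # z) A = 2" using assms by (simp add: nanoword_def)
  then show "A \<notin> set x" "A \<notin> set y" "A \<notin> set z"
    by (simp_all add: count_list_0_iff[symmetric])
qed

lemma index_count_move1:
  assumes "nanoword (x @ [A, A] @ y)"
  shows "index_count \<tau> a (x @ [A, A] @ y, p) = index_count \<tau> a (x @ y, p)"
proof -
  let ?w = "x @ [A, A] @ y"
  have "nanoword (x @ A # [] @ A # y)" using assms by simp
  note gaps = nanoword_not_in_gaps[OF this]
  have row_A: "link_sign ?w A E = 0" for E
    using link_sign_two_occurrences[of A x "[]" y E] gaps by (cases "E = A") simp_all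
  show ?thesis
  proof (rule index_count_remove_letters[where R = "{A}"])
    show "set ?w = set (x @ y) \<union> {A}" "set (x @ y) \<inter> {A} = {}"
      using gaps by auto
    show "link_index \<tau> a ?w p D = link_index \<tau> a (x @ y) p D" if "D \<in> set (x @ y)" for D
    proof (rule link_index_remove_letters[where R = "{A}"])
      show "link_sign ?w D E = link_sign (x @ y) D E" if "E \<in> set (x @ y)" for E
        using \<open>D \<in> set (x @ y)\<close> that gaps by (intro link_sign_cong_filter) auto
      show "(\<Sum>E\<in>{A}. link_sign ?w D E * charge \<tau> a (p E)) = 0"
        using row_A[of D] link_sign_swap[of ?w A D] by simp
    qed (use gaps in auto)
    show "(\<Sum>D\<in>{A}. if link_index \<tau> a ?w p D = 0 then 0 else charge \<tau> a (p D)) = 0"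
      using row_A by (simp add: link_index_def)
  qed
qed

lemma index_count_move2:
  assumes "\<forall>x. \<tau> (\<tau> x) = x" "a \<noteq> \<tau> a"
    and "nanoword (x @ [A, B] @ y @ [B, A] @ z)" "p B = \<tau> (p A)"
  shows "index_count \<tau> a (x @ [A, B] @ y @ [B, A] @ z, p) = index_count \<tau> a (x @ y @ z, p)"
proof -
  let ?w = "x @ [A, B] @ y @ [B, A] @ z"
  have "nanoword (x @ A # (B # y @ [B]) @ A # z)" "nanoword ((x @ [A]) @ B # y @ B # A # z)"
    using assms(3) by simp_all
  note gaps = nanoword_not_in_gaps[OF this(1)] nanoword_not_in_gaps[OF this(2)]
  have "A \<noteq> B" using gaps by auto
  have "link_sign ?w A B = 0"
    using gaps by (simp add: link_sign_def filter_two_letters_absent)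
  have rows: "link_sign ?w A E = link_sign ?w B E" for E
  proof -
    consider "E = A" | "E = B" | "E \<noteq> A" "E \<noteq> B" by blast
    then show ?thesis
    proof cases
      case 3
      then show ?thesis
        using link_sign_two_occurrences[of A x "B # y @ [B]" z E]
          link_sign_two_occurrences[of B "x @ [A]" y "A # z" E] gaps
        by simp
    qed (use \<open>link_sign ?w A B = 0\<close> link_sign_swap[of ?w A B] in simp_all)
  qed
  have charge_B: "charge \<tau> a (p B) = - charge \<tau> a (p A)"
    using charge_involution[OF assms(1,2)] assms(4) by simp
  show ?thesis
  proof (rule index_count_remove_letters[where R = "{A, B}"])
    show "set ?w = set (x @ y @ z) \<union> {A, B}" "set (x @ y @ z) \<inter> {A, B} = {}"
      using gaps by auto
    show "link_index \<tau> a ?w p D = link_index \<tau> a (x @ y @ z) p D" if "D \<in> set (x @ y @ z)" for D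
    proof (rule link_index_remove_letters[where R = "{A, B}"])
      show "link_sign ?w D E = link_sign (x @ y @ z) D E" if "E \<in> set (x @ y @ z)" for E
        using \<open>D \<in> set (x @ y @ z)\<close> that gaps by (intro link_sign_cong_filter) auto
      show "(\<Sum>E\<in>{A, B}. link_sign ?w D E * charge \<tau> a (p E)) = 0"
        using \<open>A \<noteq> B\<close> rows[of D] link_sign_swap[of ?w A D] link_sign_swap[of ?w B D] charge_B
        by simp
    qed (use gaps in auto)
    have "link_index \<tau> a ?w p A = link_index \<tau> a ?w p B"
      unfolding link_index_def rows ..
    then show "(\<Sum>D\<in>{A, B}. if link_index \<tau> a ?w p D = 0 then 0 else charge \<tau> a (p D)) = 0"
      using \<open>A \<noteq> B\<close> charge_B by simp
  qed
qed

lemma index_count_move3: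
  assumes "nanoword (x @ [A, B] @ y @ [A, C] @ z @ [B, C] @ t)" "distinct [A, B, C]"
    and "p A = p B" "p B = p C"
  shows "index_count \<tau> a (x @ [A, B] @ y @ [A, C] @ z @ [B, C] @ t, p) =
         index_count \<tau> a (x @ [B, A] @ y @ [C, A] @ z @ [C, B] @ t, p)"
proof -
  let ?w = "x @ [A, B] @ y @ [A, C] @ z @ [B, C] @ t"
  let ?v = "x @ [B, A] @ y @ [C, A] @ z @ [C, B] @ t"
  have "nanoword (x @ A # (B # y) @ A # C # z @ [B, C] @ t)"
    and "nanoword ((x @ [A]) @ B # (y @ [A, C] @ z) @ B # C # t)"
    and "nanoword ((x @ [A, B] @ y @ [A]) @ C # (z @ [B]) @ C # t)"
    using assms(1) by simp_all
  note gaps = nanoword_not_in_gaps[OF this(1)] nanoword_not_in_gaps[OF this(2)]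
    nanoword_not_in_gaps[OF this(3)]
  have "link_sign ?w A B = 1" "link_sign ?w A C = 0" "link_sign ?w B C = 1"
    and "link_sign ?v A B = 0" "link_sign ?v A C = 1" "link_sign ?v B C = 0"
    using gaps assms(2) by (simp_all add: link_sign_def filter_two_letters_absent)
  moreover have "(\<Sum>E\<in>{A, B, C}. f E) = f A + f B + f C" for f :: "_ \<Rightarrow> int"
    using assms(2) by simp
  ultimately have row_sums: "(\<Sum>E\<in>{A, B, C}. link_sign ?v D E) = (\<Sum>E\<in>{A, B, C}. link_sign ?w D E)"
    if "D \<in> {A, B, C}" for D
    using that link_sign_swap[of ?w A B] link_sign_swap[of ?w A C] link_sign_swap[of ?w B C]
      link_sign_swap[of ?v A B] link_sign_swap[of ?v A C] link_sign_swap[of ?v B C]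
    by auto
  \<comment> \<open>a filter keeping at most one letter of each swapped pair does not see the swaps\<close>
  have "filter P ?v = filter P ?w" if "\<not> (P A \<and> P B)" "\<not> (P A \<and> P C)" "\<not> (P B \<and> P C)" for P
    using that by simp
  then have outside: "link_sign ?v D E = link_sign ?w D E"
    if "\<not> (D \<in> {A, B, C} \<and> E \<in> {A, B, C})" for D E
    using that assms(2) by (intro link_sign_cong_filter) auto
  have "set ?v = set ?w" by auto
  moreover have "link_index \<tau> a ?v p D = link_index \<tau> a ?w p D" for D
    by (rule link_index_eq_block[where T = "{A, B, C}" and c = "p A"])
      (use row_sums outside assms(3,4) in auto)
  ultimately show ?thesis
    by simp
qed

lemma index_count_hmove:
  assumes "\<forall>x. \<tau> (\<tau> x) = x" "a \<noteq> \<tau> a" "hmove \<tau> u v"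
  shows "index_count \<tau> a u = index_count \<tau> a v"
  using assms(3)
proof cases
  case (iso w f q p)
  then show ?thesis using index_count_map[of f w q p] by simp
next
  case (move1 x A y p)
  then show ?thesis using index_count_move1[of x A y] by simp
next
  case (move2 x A B y z p)
  then show ?thesis using index_count_move2[OF assms(1,2), of x A B y z p] by simp
next
  case (move3 x A B y C z t p)
  then show ?thesis using index_count_move3[of x A B y C z t p] by simp
qed

lemma index_count_nano_homotopic:
  assumes "\<forall>x. \<tau> (\<tau> x) = x" "a \<noteq> \<tau> a" "nano_homotopic \<tau> u v"
  shows "index_count \<tau> a u = index_count \<tau> a v"
  using assms(3) unfolding nano_homotopic_def
proof induction
  case (step v w)
  then show ?case
    using index_count_hmove[OF assms(1,2), of v w] index_count_hmove[OF assms(1,2), of w v] by auto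
qed simp

section \<open>Desingularized monoliteral words\<close>

(* The k-th block of desing (replicate m c) lists the letters (c, min k s, max k s), s \<noteq> k, in
   increasing order of s. Hence desing (replicate m c) is the image under pair_letter c of the
   lexicographically sorted list of all pairs (k, s) with k \<noteq> s, and the two occurrences of the
   letter (c, i, j) sit at the positions of (i, j) and (j, i). *)
definition ordered_pairs :: "nat \<Rightarrow> (nat \<times> nat) list" where
  "ordered_pairs m = concat (map (\<lambda>t. map (Pair t) ([1..<t] @ [Suc t..<Suc m])) [1..<Suc m])"

definition pair_letter :: "'c \<Rightarrow> nat \<times> nat \<Rightarrow> 'c \<times> nat \<times> nat" where
  "pair_letter c u = (c, min (fst u) (snd u), max (fst u) (snd u))"

definition index_pairs :: "nat \<Rightarrow> (nat \<times> nat) set" where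
  "index_pairs m = {(i, j). 1 \<le> i \<and> i < j \<and> j \<le> m}"

lemma sorted_wrt_concat_blocks:
  fixes ts :: "'a::linorder list" and S :: "'a \<Rightarrow> 'b::linorder list"
  assumes "sorted_wrt (<) ts" "\<And>t. sorted_wrt (<) (S t)"
  shows "sorted_wrt (<) (concat (map (\<lambda>t. map (Pair t) (S t)) ts))"
  using assms(1)
proof (induction ts)
  case (Cons t ts)
  have "sorted_wrt (<) (map (Pair t) (S t))"
    using assms(2)[of t] by (simp add: sorted_wrt_map)
  then show ?case
    using Cons by (auto simp: sorted_wrt_append)
qed simp

lemma sorted_map_eq_interlaced_iff:
  fixes a1 a2 b1 b2 :: "'k::linorder"
  assumes "sorted_wrt (<) L" "set L = {a1, a2, b1, b2}" "a1 < a2" "b1 < b2"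
    and "g a1 = A" "g a2 = A" "g b1 = B" "g b2 = B" "A \<noteq> B"
  shows "map g L = [A, B, A, B] \<longleftrightarrow> a1 < b1 \<and> b1 < a2 \<and> a2 < b2"
proof
  assume "map g L = [A, B, A, B]"
  then obtain x1 x2 x3 x4 where L: "L = [x1, x2, x3, x4]"
    and g: "g x1 = A" "g x2 = B" "g x3 = A" "g x4 = B"
    by (auto simp: map_eq_Cons_conv)
  have "x \<in> {a1, a2}" if "x \<in> set L" "g x = A" for x
    using that assms(2,7-9) by auto
  moreover have "x \<in> {b1, b2}" if "x \<in> set L" "g x = B" for x
    using that assms(2,5,6,9) by auto
  ultimately have "x1 \<in> {a1, a2}" "x3 \<in> {a1, a2}" "x2 \<in> {b1, b2}" "x4 \<in> {b1, b2}"
    using g unfolding L by simp_all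
  moreover have "x1 < x2" "x2 < x3" "x3 < x4" "x1 < x3" "x2 < x4"
    using assms(1) unfolding L by auto
  ultimately show "a1 < b1 \<and> b1 < a2 \<and> a2 < b2"
    using assms(3,4) by auto
next
  assume "a1 < b1 \<and> b1 < a2 \<and> a2 < b2"
  then have "L = [a1, b1, a2, b2]"
    using assms(1,2) by (intro strict_sorted_equal) auto
  then show "map g L = [A, B, A, B]"
    using assms(5-8) by simp
qed

lemma count_list_replicate_same: "count_list (replicate n x) x = n"
  by (induction n) auto

lemma sorted_ordered_pairs: "sorted_wrt (<) (ordered_pairs m)"
  unfolding ordered_pairs_def by (rule sorted_wrt_concat_blocks) (auto simp: sorted_wrt_append)

lemma set_ordered_pairs:
  "set (ordered_pairs m) = {(t, s). 1 \<le> t \<and> t \<le> m \<and> 1 \<le> s \<and> s \<le> m \<and> t \<noteq> s}"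
  unfolding ordered_pairs_def by force

lemma desing_replicate: "desing (replicate m c) = map (pair_letter c) (ordered_pairs m)"
proof -
  have "desing (replicate m c) = concat (map (\<lambda>k. map (\<lambda>j. (c, j, Suc k)) [1..<Suc k]
      @ map (\<lambda>j. (c, Suc k, j)) [Suc (Suc k)..<Suc m]) [0..<m])"
    unfolding desing_def
    by (intro arg_cong[where f = concat] map_cong)
      (auto simp: take_replicate min_def count_list_replicate_same Let_def)
  also have "\<dots> = concat (map (\<lambda>i. map (\<lambda>j. (c, j, i)) [1..<i] @ map (\<lambda>j. (c, i, j)) [Suc i..<Suc m])
      [1..<Suc m])"
    by (simp only: map_Suc_upt[symmetric] One_nat_def map_map comp_def)
  also have "\<dots> = map (pair_letter c) (ordered_pairs m)"
    unfolding ordered_pairs_def map_concat map_map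
    by (intro arg_cong[where f = concat] map_cong) (auto simp: pair_letter_def)
  finally show ?thesis .
qed

lemma set_desing_replicate: "set (desing (replicate m c)) = Pair c ` index_pairs m"
proof (intro equalityI subsetI)
  fix X assume "X \<in> set (desing (replicate m c))"
  then show "X \<in> Pair c ` index_pairs m"
    unfolding desing_replicate set_map set_ordered_pairs
    by (force simp: pair_letter_def index_pairs_def min_def max_def)
next
  fix X assume "X \<in> Pair c ` index_pairs m"
  then obtain i j where "X = (c, i, j)" "(i, j) \<in> index_pairs m"
    by auto
  then have "X = pair_letter c (i, j)" "(i, j) \<in> set (ordered_pairs m)"
    by (auto simp: pair_letter_def index_pairs_def set_ordered_pairs)
  then show "X \<in> set (desing (replicate m c))"
    unfolding desing_replicate by simp
qed

lemma pair_letter_eq_iff: "i < j \<Longrightarrow> pair_letter c u = (c, i, j) \<longleftrightarrow> u = (i, j) \<or> u = (j, i)"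
  by (cases u) (auto simp: pair_letter_def min_def max_def)

lemma link_sign_desing_replicate:
  assumes "(i, j) \<in> index_pairs m" "(k, l) \<in> index_pairs m" "(i, j) \<noteq> (k, l)"
  shows "link_sign (desing (replicate m c)) (c, i, j) (c, k, l) =
    (if i \<le> k \<and> k < j \<and> j \<le> l then 1 else if k \<le> i \<and> i < l \<and> l \<le> j then -1 else 0)"
proof -
  let ?L = "filter (\<lambda>u. pair_letter c u = (c, i, j) \<or> pair_letter c u = (c, k, l)) (ordered_pairs m)"
  have ord: "i < j" "k < l" using assms(1,2) by (auto simp: index_pairs_def)
  have filter_eq: "filter (\<lambda>v. v = (c, i, j) \<or> v = (c, k, l)) (desing (replicate m c)) =
      map (pair_letter c) ?L"
    by (simp add: desing_replicate filter_map comp_def)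
  have sorted: "sorted_wrt (<) ?L"
    by (rule sorted_wrt_filter[OF sorted_ordered_pairs])
  have set_L: "set ?L = {(i, j), (j, i), (k, l), (l, k)}"
    using assms(1,2) unfolding set_filter set_ordered_pairs pair_letter_eq_iff[OF ord(1)]
      pair_letter_eq_iff[OF ord(2)]
    by (auto simp: index_pairs_def)
  then have set_L': "set ?L = {(k, l), (l, k), (i, j), (j, i)}"
    by auto
  have "map (pair_letter c) ?L = [(c, i, j), (c, k, l), (c, i, j), (c, k, l)]
      \<longleftrightarrow> (i, j) < (k, l) \<and> (k, l) < (j, i) \<and> (j, i) < (l, k)"
    by (rule sorted_map_eq_interlaced_iff[OF sorted set_L])
      (use ord assms(3) in \<open>auto simp: pair_letter_def\<close>)
  moreover have "map (pair_letter c) ?L = [(c, k, l), (c, i, j), (c, k, l), (c, i, j)]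
      \<longleftrightarrow> (k, l) < (i, j) \<and> (i, j) < (l, k) \<and> (l, k) < (j, i)"
    by (rule sorted_map_eq_interlaced_iff[OF sorted set_L'])
      (use ord assms(3) in \<open>auto simp: pair_letter_def\<close>)
  moreover have "(i, j) < (k, l) \<and> (k, l) < (j, i) \<and> (j, i) < (l, k) \<longleftrightarrow> i \<le> k \<and> k < j \<and> j \<le> l"
    and "(k, l) < (i, j) \<and> (i, j) < (l, k) \<and> (l, k) < (j, i) \<longleftrightarrow> k \<le> i \<and> i < l \<and> l \<le> j"
    using ord assms(3) by auto
  ultimately show ?thesis
    using assms(3) by (simp add: link_sign_def Let_def filter_eq)
qed

lemma finite_index_pairs: "finite (index_pairs m)"
  by (rule finite_subset[of _ "{1..m} \<times> {1..m}"]) (auto simp: index_pairs_def)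

lemma inj_on_Pair: "inj_on (Pair c) A"
  by (simp add: inj_on_def)

lemma link_index_desing_replicate:
  assumes "(i, j) \<in> index_pairs m"
  shows "link_index \<tau> c (desing (replicate m c)) fst (c, i, j) = int (j - i) * (int m + 1 - int i - int j)"
proof -
  \<comment> \<open>the pairs (k, l) with i \<le> k < j \<le> l resp. k \<le> i < l \<le> j, other than (i, j)\<close>
  define P1 where "P1 = {i..<j} \<times> {j..m} - {(i, j)}"
  define P2 where "P2 = {1..i} \<times> {Suc i..j} - {(i, j)}"
  have ij: "1 \<le> i" "i < j" "j \<le> m" using assms by (auto simp: index_pairs_def)
  have "link_index \<tau> c (desing (replicate m c)) fst (c, i, j) =
      (\<Sum>u\<in>index_pairs m. link_sign (desing (replicate m c)) (c, i, j) (c, fst u, snd u))"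
    unfolding link_index_def set_desing_replicate sum.reindex[OF inj_on_Pair]
    by (simp add: charge_def)
  also have "\<dots> = (\<Sum>u\<in>index_pairs m. of_bool (u \<in> P1) - of_bool (u \<in> P2))"
  proof (rule sum.cong)
    fix u assume "u \<in> index_pairs m"
    then obtain k l where u: "u = (k, l)" "(k, l) \<in> index_pairs m" by (cases u) auto
    then show "link_sign (desing (replicate m c)) (c, i, j) (c, fst u, snd u) =
        of_bool (u \<in> P1) - of_bool (u \<in> P2)"
      using assms ij by (cases "(k, l) = (i, j)")
        (auto simp: link_sign_desing_replicate P1_def P2_def index_pairs_def)
  qed simp
  also have "\<dots> = int (card P1) - int (card P2)"
  proof -
    have "P1 \<subseteq> index_pairs m" "P2 \<subseteq> index_pairs m"
      using ij by (auto simp: P1_def P2_def index_pairs_def)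
    then show ?thesis
      by (simp add: sum_subtractf finite_index_pairs Int_absorb1)
  qed
  also have "Suc (card P1) = (j - i) * (Suc m - j)"
    using card.remove[of "{i..<j} \<times> {j..m}" "(i, j)"] ij
    by (simp add: P1_def card_cartesian_product)
  then have "int (card P1) = int ((j - i) * (Suc m - j)) - 1"
    by (simp flip: \<open>Suc (card P1) = _\<close>)
  also have "Suc (card P2) = i * (j - i)"
    using card.remove[of "{1..i} \<times> {Suc i..j}" "(i, j)"] ij
    by (simp add: P2_def card_cartesian_product)
  then have "int (card P2) = int (i * (j - i)) - 1"
    by (simp flip: \<open>Suc (card P2) = _\<close>)
  finally have "link_index \<tau> c (desing (replicate m c)) fst (c, i, j) =
      int ((j - i) * (Suc m - j)) - 1 - (int (i * (j - i)) - 1)" .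
  moreover have "int (j - i) = int j - int i" "int (Suc m - j) = int m + 1 - int j"
    using ij by (simp_all add: of_nat_diff)
  ultimately show ?thesis
    by (simp only: of_nat_mult) (simp add: algebra_simps)
qed

lemma link_index_desing_replicate_eq_0_iff:
  assumes "(i, j) \<in> index_pairs m"
  shows "link_index \<tau> c (desing (replicate m c)) fst (c, i, j) = 0 \<longleftrightarrow> i + j = Suc m"
proof -
  have "i < j" using assms by (simp add: index_pairs_def)
  then show ?thesis
    unfolding link_index_desing_replicate[OF assms] by (simp only: mult_eq_0_iff) linarith
qed

definition off_antidiagonal_pairs :: "nat \<Rightarrow> (nat \<times> nat) set" where
  "off_antidiagonal_pairs m = {u \<in> index_pairs m. fst u + snd u \<noteq> Suc m}"

lemma index_count_desing_replicate_same:
  "index_count \<tau> c (desing (replicate m c), fst) = int (card (off_antidiagonal_pairs m))"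
proof -
  have "index_count \<tau> c (desing (replicate m c), fst) =
      (\<Sum>u\<in>index_pairs m. if link_index \<tau> c (desing (replicate m c)) fst (c, u) = 0 then 0 else 1)"
    unfolding index_count.simps set_desing_replicate sum.reindex[OF inj_on_Pair]
    by (intro sum.cong) (simp_all add: charge_def)
  also have "\<dots> = (\<Sum>u\<in>index_pairs m. of_bool (fst u + snd u \<noteq> Suc m))"
  proof (rule sum.cong[OF refl])
    fix u assume "u \<in> index_pairs m"
    then show "(if link_index \<tau> c (desing (replicate m c)) fst (c, u) = 0 then 0 else 1) =
        (of_bool (fst u + snd u \<noteq> Suc m) :: int)"
      using link_index_desing_replicate_eq_0_iff[of "fst u" "snd u" m \<tau> c] by simp
  qed
  also have "\<dots> = int (card (off_antidiagonal_pairs m))"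
    by (simp add: finite_index_pairs off_antidiagonal_pairs_def Collect_conj_eq)
  finally show ?thesis .
qed

lemma index_count_desing_replicate_other:
  assumes "b \<noteq> a"
  shows "index_count \<tau> a (desing (replicate n b), fst) \<le> 0"
  using assms unfolding index_count.simps set_desing_replicate
  by (intro sum_nonpos) (auto simp: charge_def)

lemma card_off_antidiagonal_pairs_less_Suc:
  assumes "2 \<le> m"
  shows "card (off_antidiagonal_pairs m) < card (off_antidiagonal_pairs (Suc m))"
proof -
  let ?shift = "\<lambda>u. (fst u, Suc (snd u))"
  have fin: "finite (off_antidiagonal_pairs (Suc m))"
    using finite_index_pairs by (simp add: off_antidiagonal_pairs_def)
  have "card (off_antidiagonal_pairs m) = card (?shift ` off_antidiagonal_pairs m)"
    by (rule card_image[symmetric]) (simp add: inj_on_def prod_eq_iff)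
  also have "\<dots> \<le> card (off_antidiagonal_pairs (Suc m) - {(1, 2)})"
    using fin by (intro card_mono) (auto simp: off_antidiagonal_pairs_def index_pairs_def)
  also have "\<dots> < card (off_antidiagonal_pairs (Suc m))"
    using fin assms by (intro card_Diff1_less) (auto simp: off_antidiagonal_pairs_def index_pairs_def)
  finally show ?thesis .
qed

lemma card_off_antidiagonal_pairs_less:
  assumes "2 \<le> m" "m < n"
  shows "card (off_antidiagonal_pairs m) < card (off_antidiagonal_pairs n)"
proof -
  from assms(2) have "Suc m \<le> n" by simp
  then show ?thesis
  proof (induction n rule: dec_induct)
    case base
    show ?case using card_off_antidiagonal_pairs_less_Suc[OF assms(1)] .
  next
    case (step n)
    then show ?case
      using card_off_antidiagonal_pairs_less_Suc[of n] assms(1) by simp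
  qed
qed

theorem theorem6p3:
  fixes \<tau> :: "'a \<Rightarrow> 'a" and a b :: 'a and m n :: nat
  assumes "\<forall>x. \<tau> (\<tau> x) = x"
    and "a \<noteq> \<tau> a" and "b \<noteq> \<tau> b"
    and "m \<ge> 3" and "n \<ge> 3"
  shows "etale_homotopic \<tau> (replicate m a, id) (replicate n b, id) \<longleftrightarrow> a = b \<and> m = n"
proof
  assume "etale_homotopic \<tau> (replicate m a, id) (replicate n b, id)"
  then have "nano_homotopic \<tau> (desing (replicate m a), fst) (desing (replicate n b), fst)"
    by (simp add: etale_homotopic_def)
  then have same_count: "index_count \<tau> a (desing (replicate m a), fst) =
      index_count \<tau> a (desing (replicate n b), fst)"
    by (rule index_count_nano_homotopic[OF assms(1,2)])
  \<comment> \<open>the invariant of the letter a alone decides the question\<close>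
  have "0 < card (off_antidiagonal_pairs m)"
    using card_off_antidiagonal_pairs_less[of 2 m] assms(4) by simp
  then have "a = b"
    using same_count index_count_desing_replicate_same[of \<tau> a m]
      index_count_desing_replicate_other[of b a \<tau> n]
    by (cases "a = b") auto
  then have "card (off_antidiagonal_pairs m) = card (off_antidiagonal_pairs n)"
    using same_count index_count_desing_replicate_same[of \<tau> b] by simp
  then have "m = n"
    using card_off_antidiagonal_pairs_less[of m n] card_off_antidiagonal_pairs_less[of n m] assms(4,5)
    by (cases m n rule: linorder_cases) auto
  with \<open>a = b\<close> show "a = b \<and> m = n" ..
next
  assume "a = b \<and> m = n"
  then show "etale_homotopic \<tau> (replicate m a, id) (replicate n b, id)"
    by (simp add: etale_homotopic_def nano_homotopic_def)
qed

end
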